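(* Define $Q(0)=0$, $Q(1)=1$, $Q(n)=b(n)Q(n-1)+Q(n-2)$ for $n\ge2$, where $b(n)=2n/3$ if $3\mid n$ and $b(n)=1$ if $3\nmid n$. For every integer $M>0$, the sequence $(Q(n)\bmod M)_{n\ge0}$ is periodic, with period at most $3M^3$.
   Context: $Q(n)$ is the denominator of the $n$th convergent of the simple continued fraction of $e$. *)

theory Defs
  imports Main
begin

definition b :: "nat \<Rightarrow> nat" where
  "b n = (if 3 dvd n then 2 * n div 3 else 1)"

fun Q :: "nat \<Rightarrow> nat" where
  "Q 0 = 0"
| "Q (Suc 0) = 1"
| "Q (Suc (Suc n)) = b (Suc (Suc n)) * Q (Suc n) + Q n"

end

theory Submission
  imports Defs "HOL-Number_Theory.Cong"
begin

text \<open>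
  Group the terms of Q into blocks Q(3k), Q(3k+1), Q(3k+2). Since b(3k+2), b(3k+3), b(3k+4) are
  1, 2k+2, 1, the residues mod M of Q(3k+3) and Q(3k+4) are determined by k mod M together with
  the residues of Q(3k) and Q(3k+1), and conversely, as the recurrence can be run backwards. The triple of these three
  residues thus evolves by an injective map on a set of M^3 states, so it is purely periodic
  with some period p \<le> M^3, and Q mod M is periodic with period 3p.
\<close>

lemma reversible_sequence_shift_eq_iff:
  assumes "\<And>i j. s (Suc i) = s (Suc j) \<longleftrightarrow> s i = s j"
  shows "s (i + k) = s (j + k) \<longleftrightarrow> s i = s j"
  using assms by (induction k) simp_all

lemma reversible_sequence_periodic:
  assumes "finite S" and "range s \<subseteq> S"
    and reversible: "\<And>i j. s (Suc i) = s (Suc j) \<longleftrightarrow> s i = s j"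
  shows "\<exists>p. 0 < p \<and> p \<le> card S \<and> (\<forall>k. s (k + p) = s k)"
proof -
  have "card (s ` {..card S}) \<le> card S"
    using assms(1,2) by (intro card_mono) auto
  then have "\<not> inj_on s {..card S}"
    by (metis card_atMost le_imp_less_Suc pigeonhole)
  then obtain i j where ij: "i < j" "j \<le> card S" "s i = s j"
    unfolding inj_on_def by (metis atMost_iff linorder_neqE_nat)
  define p where "p = j - i"
  have "s (0 + i) = s (p + i)"
    using ij by (simp add: p_def)
  then have "s 0 = s p"
    using reversible_sequence_shift_eq_iff[of s, OF reversible] by blast
  then have "s (0 + k) = s (p + k)" for k
    using reversible_sequence_shift_eq_iff[of s, OF reversible] by blast
  then show ?thesis
    using ij by (intro exI[of _ p]) (auto simp: p_def add.commute)
qed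

lemma cong_add_cancel_left_nat:
  fixes a b x y n :: nat
  assumes "[a + x = b + y] (mod n)" and "[a = b] (mod n)"
  shows "[x = y] (mod n)"
  using assms by (metis cong_add cong_add_lcancel_nat cong_refl cong_sym cong_trans)

lemma b_3k_plus_2: "b (3 * k + 2) = 1"
  and b_3k_plus_3: "b (3 * k + 3) = 2 * k + 2"
  and b_3k_plus_4: "b (3 * k + 4) = 1"
  unfolding b_def by presburger+

lemma Q_add_2: "Q (n + 2) = b (n + 2) * Q (n + 1) + Q n"
  by (simp add: numeral_2_eq_2)

declare Q.simps(3) [simp del]

lemma Q_3k_plus_2: "Q (3 * k + 2) = Q (3 * k + 1) + Q (3 * k)"
  using Q_add_2[of "3 * k"] by (simp only: b_3k_plus_2 mult_1)

lemma Q_3k_plus_3: "Q (3 * k + 3) = (2 * k + 2) * Q (3 * k + 2) + Q (3 * k + 1)"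
  using Q_add_2[of "3 * k + 1"] by (simp only: add.assoc numeral_plus_one one_plus_numeral semiring_norm b_3k_plus_3)

lemma Q_3k_plus_4: "Q (3 * k + 4) = Q (3 * k + 3) + Q (3 * k + 2)"
  using Q_add_2[of "3 * k + 2"] by (simp only: add.assoc numeral_plus_numeral semiring_norm b_3k_plus_4 mult_1)

definition block_state :: "nat \<Rightarrow> nat \<Rightarrow> nat \<times> nat \<times> nat" where
  "block_state M k = (k mod M, Q (3 * k) mod M, Q (3 * k + 1) mod M)"

lemma block_state_eq_iff:
  "block_state M i = block_state M j \<longleftrightarrow>
     [i = j] (mod M) \<and> [Q (3 * i) = Q (3 * j)] (mod M) \<and> [Q (3 * i + 1) = Q (3 * j + 1)] (mod M)"
  by (simp add: block_state_def cong_def)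

lemma cong_Q_3k_plus_2:
  assumes "block_state M i = block_state M j"
  shows "[Q (3 * i + 2) = Q (3 * j + 2)] (mod M)"
  unfolding Q_3k_plus_2 using assms by (simp add: block_state_eq_iff cong_add)

lemma block_state_Suc_eq_iff_cong:
  "block_state M (Suc i) = block_state M (Suc j) \<longleftrightarrow>
     [i = j] (mod M) \<and> [Q (3 * i + 3) = Q (3 * j + 3)] (mod M) \<and> [Q (3 * i + 4) = Q (3 * j + 4)] (mod M)"
proof -
  have "Q (3 * Suc k) = Q (3 * k + 3)" "Q (3 * Suc k + 1) = Q (3 * k + 4)" for k
    by (simp_all add: add.commute)
  then show ?thesis
    unfolding block_state_eq_iff by (simp add: cong_add_rcancel_nat[of i 1 j, simplified])
qed

lemma block_state_Suc_eq:
  assumes same: "block_state M i = block_state M j"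
  shows "block_state M (Suc i) = block_state M (Suc j)"
proof -
  have ij: "[i = j] (mod M)" "[Q (3 * i + 1) = Q (3 * j + 1)] (mod M)"
    using same by (simp_all add: block_state_eq_iff)
  have two: "[Q (3 * i + 2) = Q (3 * j + 2)] (mod M)"
    using same by (rule cong_Q_3k_plus_2)
  have "[2 * i + 2 = 2 * j + 2] (mod M)"
    using ij(1) by (intro cong_add cong_mult cong_refl)
  then have three: "[Q (3 * i + 3) = Q (3 * j + 3)] (mod M)"
    unfolding Q_3k_plus_3 using two ij(2) by (rule cong_add[OF cong_mult])
  then have "[Q (3 * i + 4) = Q (3 * j + 4)] (mod M)"
    unfolding Q_3k_plus_4 using two by (intro cong_add)
  with ij(1) three show ?thesis
    by (simp add: block_state_Suc_eq_iff_cong)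
qed

lemma block_state_eq_if_Suc_eq:
  assumes "block_state M (Suc i) = block_state M (Suc j)"
  shows "block_state M i = block_state M j"
proof -
  have ij: "[i = j] (mod M)"
    and three: "[Q (3 * i + 3) = Q (3 * j + 3)] (mod M)"
    and four: "[Q (3 * i + 4) = Q (3 * j + 4)] (mod M)"
    using assms by (simp_all add: block_state_Suc_eq_iff_cong)
  have two: "[Q (3 * i + 2) = Q (3 * j + 2)] (mod M)"
    using cong_add_cancel_left_nat[OF four[unfolded Q_3k_plus_4] three] .
  have "[2 * i + 2 = 2 * j + 2] (mod M)"
    using ij by (intro cong_add cong_mult cong_refl)
  then have one: "[Q (3 * i + 1) = Q (3 * j + 1)] (mod M)"
    using cong_add_cancel_left_nat[OF three[unfolded Q_3k_plus_3]] two by (blast intro: cong_mult)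
  have "[Q (3 * i) = Q (3 * j)] (mod M)"
    using cong_add_cancel_left_nat[OF two[unfolded Q_3k_plus_2] one] .
  with ij one show ?thesis
    by (simp add: block_state_eq_iff)
qed

lemma block_state_Suc_eq_iff:
  "block_state M (Suc i) = block_state M (Suc j) \<longleftrightarrow> block_state M i = block_state M j"
  using block_state_Suc_eq block_state_eq_if_Suc_eq by blast

lemma block_state_periodic:
  assumes "M > 0"
  shows "\<exists>p. 0 < p \<and> p \<le> M ^ 3 \<and> (\<forall>k. block_state M (k + p) = block_state M k)"
proof -
  have "range (block_state M) \<subseteq> {..<M} \<times> {..<M} \<times> {..<M}"
    using assms by (auto simp: block_state_def)
  moreover have "card ({..<M} \<times> {..<M} \<times> {..<M}) = M ^ 3"
    by (simp add: card_cartesian_product power3_eq_cube)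
  ultimately show ?thesis
    using reversible_sequence_periodic[of "{..<M} \<times> {..<M} \<times> {..<M}" "block_state M"]
    by (simp add: block_state_Suc_eq_iff)
qed

lemma cong_Q_if_block_state_eq:
  assumes "block_state M (k + p) = block_state M k" and "r < 3"
  shows "[Q (3 * k + r + 3 * p) = Q (3 * k + r)] (mod M)"
proof -
  have "[Q (3 * (k + p) + r) = Q (3 * k + r)] (mod M)"
    using assms cong_Q_3k_plus_2[OF assms(1)]
    by (auto simp: block_state_eq_iff less_Suc_eq numeral_3_eq_3 numeral_2_eq_2)
  then show ?thesis
    by (simp add: algebra_simps)
qed

theorem propositionA6:
  fixes M :: nat
  assumes "M > 0"
  shows "\<exists>p. 0 < p \<and> p \<le> 3 * M ^ 3 \<and> (\<forall>n. Q (n + p) mod M = Q n mod M)"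
proof -
  obtain p where p: "0 < p" "p \<le> M ^ 3" "\<And>k. block_state M (k + p) = block_state M k"
    using block_state_periodic[OF assms] by blast
  have "Q (n + 3 * p) mod M = Q n mod M" for n
  proof -
    have "n = 3 * (n div 3) + n mod 3" "n mod 3 < 3"
      by simp_all
    then show ?thesis
      using cong_Q_if_block_state_eq[OF p(3)] unfolding cong_def by metis
  qed
  with p show ?thesis
    by (intro exI[of _ "3 * p"]) auto
qed

end
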